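(* For every integer $n\geq 1$, \[ \sum_{k,\ell,d\geq 0}\binom{n-1-d}{\ell}\binom{n-1-k}{d}\binom{n-1-\ell}{k} = \tfrac{1}{2}F_{3n}. \]
   Context: $F_n$ is the Fibonacci sequence: $F_0=0$, $F_1=1$, $F_n=F_{n-1}+F_{n-2}$ for $n\ge2$. Binomial coefficients $\binom{a}{b}$ with $b\ge0$ are taken to be $0$ when $a<b$ (in particular when $a<0$), so the sum is finite. *)

theory Defs
  imports "HOL-Number_Theory.Fib"
begin

definition binz :: "int \<Rightarrow> nat \<Rightarrow> nat" where
  "binz a b = (if a < 0 then 0 else nat a choose b)"

end

theory Submission
  imports Defs "HOL-Computational_Algebra.Polynomial"
begin

text \<open>With \<open>N = n - 1\<close> the triple sum is the trace of \<open>M^3\<close>, where \<open>M a b = (N - a choose b)\<close>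
  is the matrix, in the monomial basis, of the operator \<open>p \<mapsto> (1 + x)^N p (1 / (1 + x))\<close> on
  polynomials of degree at most \<open>N\<close>. Because \<open>1 + c = c^2\<close> for \<open>c \<in> {\<phi>, \<psi>}\<close>, the
  polynomials \<open>(x + \<psi>)^i (x + \<phi>)^(N - i)\<close> are eigenvectors with eigenvalues \<open>\<psi>^i \<phi>^(N - i)\<close>,
  and they form a basis, being the image of the monomials under an invertible linear change of
  variables. The trace of \<open>M^3\<close> is therefore the geometric sum
  \<open>\<Sum>i\<le>N. (\<psi>^i \<phi>^(N - i))^3 = (\<phi>^(3n) - \<psi>^(3n)) / (\<phi>^3 - \<psi>^3) = F(3n) / F(3)\<close>.\<close>

lemma poly_eqI_off_roots:
  fixes p q r :: "'a::{idom,ring_char_0} poly"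
  assumes "r \<noteq> 0" and "\<And>x. poly r x \<noteq> 0 \<Longrightarrow> poly p x = poly q x"
  shows "p = q"
proof -
  have "poly ((p - q) * r) x = 0" for x
    using assms(2)[of x] by auto
  then have "(p - q) * r = 0"
    using poly_all_0_iff_0 by blast
  with assms(1) show ?thesis by simp
qed

lemma poly_altdef_le:
  fixes p :: "'a::{comm_semiring_0,semiring_1} poly"
  assumes "degree p \<le> N"
  shows "poly p x = (\<Sum>i\<le>N. coeff p i * x ^ i)"
proof -
  have "poly p x = (\<Sum>i\<le>degree p. coeff p i * x ^ i)"
    by (rule poly_altdef)
  also have "\<dots> = (\<Sum>i\<le>N. coeff p i * x ^ i)"
    by (rule sum.mono_neutral_left) (use assms in \<open>auto simp: coeff_eq_0\<close>)
  finally show ?thesis .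
qed

lemma poly_degree_le_1:
  fixes p :: "'a::{comm_semiring_0,semiring_1} poly"
  assumes "degree p \<le> 1"
  shows "poly p x = coeff p 0 + coeff p 1 * x"
  using poly_altdef_le[OF assms, of x] by simp

text \<open>\<open>B^N r(A / B)\<close> with the denominators cleared; for linear \<open>A\<close>, \<open>B\<close> this is the action of a
  linear change of variables on polynomials of degree at most \<open>N\<close>.\<close>

definition hom_subst :: "nat \<Rightarrow> 'a::comm_ring_1 poly \<Rightarrow> 'a poly \<Rightarrow> 'a poly \<Rightarrow> 'a poly" where
  "hom_subst N r A B = (\<Sum>i\<le>N. smult (coeff r i) (A ^ i * B ^ (N - i)))"

lemma hom_subst_monom:
  assumes "a \<le> N"
  shows "hom_subst N (monom 1 a) A B = A ^ a * B ^ (N - a)"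
  using assms by (simp add: hom_subst_def coeff_monom if_distrib[of "\<lambda>c. smult c _"] cong: if_cong)

lemma hom_subst_sum_smult:
  "hom_subst N (\<Sum>i\<in>I. smult (c i) (p i)) A B = (\<Sum>i\<in>I. smult (c i) (hom_subst N (p i) A B))"
  by (rule poly_eqI)
    (simp add: hom_subst_def coeff_sum sum_distrib_left sum_distrib_right sum.swap[of _ I] mult_ac)

lemma degree_hom_subst:
  assumes "degree A \<le> 1" "degree B \<le> 1"
  shows "degree (hom_subst N r A B) \<le> N"
  unfolding hom_subst_def
proof (intro degree_sum_le ballI order.trans[OF degree_smult_le])
  fix i assume "i \<in> {..N}"
  have "degree (A ^ i * B ^ (N - i)) \<le> degree A * i + degree B * (N - i)"
    by (intro order.trans[OF degree_mult_le] add_mono degree_power_le)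
  also have "\<dots> \<le> i + (N - i)"
    using assms by (intro add_mono) auto
  finally show "degree (A ^ i * B ^ (N - i)) \<le> N"
    using \<open>i \<in> {..N}\<close> by simp
qed simp

lemma poly_hom_subst:
  fixes r :: "'a::field poly"
  assumes "degree r \<le> N" "poly B x \<noteq> 0"
  shows "poly (hom_subst N r A B) x = poly B x ^ N * poly r (poly A x / poly B x)"
proof -
  have "poly (hom_subst N r A B) x = (\<Sum>i\<le>N. coeff r i * (poly A x ^ i * poly B x ^ (N - i)))"
    by (simp add: hom_subst_def poly_sum)
  also have "\<dots> = (\<Sum>i\<le>N. poly B x ^ N * (coeff r i * (poly A x / poly B x) ^ i))"
  proof (rule sum.cong[OF refl])
    fix i assume "i \<in> {..N}"
    then have "poly B x ^ N = poly B x ^ i * poly B x ^ (N - i)"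
      by (simp flip: power_add)
    then show "coeff r i * (poly A x ^ i * poly B x ^ (N - i))
      = poly B x ^ N * (coeff r i * (poly A x / poly B x) ^ i)"
      using assms(2) by (simp add: power_divide)
  qed
  also have "\<dots> = poly B x ^ N * poly r (poly A x / poly B x)"
    by (simp add: poly_altdef_le[OF assms(1)] sum_distrib_left)
  finally show ?thesis .
qed

lemma hom_subst_inverse:
  fixes r A B C D :: "'a::field_char_0 poly"
  assumes "degree r \<le> N" "degree C \<le> 1" "degree D \<le> 1" "B \<noteq> 0"
    and C: "smult (coeff C 0) B + smult (coeff C 1) A = [:0, 1:]"
    and D: "smult (coeff D 0) B + smult (coeff D 1) A = 1"
  shows "hom_subst N (hom_subst N r C D) A B = r"
proof (rule poly_eqI_off_roots[OF \<open>B \<noteq> 0\<close>])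
  fix x assume Bx: "poly B x \<noteq> 0"
  define t where "t = poly A x / poly B x"
  have BC: "poly B x * poly C t = x" and BD: "poly B x * poly D t = 1"
    using arg_cong[OF C, of "\<lambda>p. poly p x"] arg_cong[OF D, of "\<lambda>p. poly p x"] Bx
    by (simp_all add: poly_degree_le_1[OF assms(2)] poly_degree_le_1[OF assms(3)] t_def field_simps)
  then have "poly D t = 1 / poly B x"
    using Bx by (simp add: eq_divide_eq mult.commute)
  then have "poly D t \<noteq> 0" and "poly C t / poly D t = x"
    using Bx BC by (simp_all add: mult.commute)
  have "poly (hom_subst N (hom_subst N r C D) A B) x = poly B x ^ N * poly (hom_subst N r C D) t"
    using degree_hom_subst[OF assms(2,3)] Bx by (simp add: poly_hom_subst t_def)
  also have "\<dots> = (poly B x * poly D t) ^ N * poly r (poly C t / poly D t)"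
    using \<open>poly D t \<noteq> 0\<close> assms(1) by (simp add: poly_hom_subst power_mult_distrib)
  also have "\<dots> = poly r x"
    using BD \<open>poly C t / poly D t = x\<close> by simp
  finally show "poly (hom_subst N (hom_subst N r C D) A B) x = poly r x" .
qed

lemma factored_matrix_mult:
  fixes Q P :: "nat \<Rightarrow> nat \<Rightarrow> 'a::comm_ring_1"
  assumes biorth: "\<And>i j. i \<le> N \<Longrightarrow> j \<le> N \<Longrightarrow> (\<Sum>a\<le>N. Q a i * P a j) = (if i = j then 1 else 0)"
  shows "(\<Sum>d\<le>N. (\<Sum>i\<le>N. c i * Q a i * P d i) * (\<Sum>j\<le>N. e j * Q d j * P b j))
    = (\<Sum>i\<le>N. c i * e i * Q a i * P b i)"
proof -
  have "(\<Sum>d\<le>N. (\<Sum>i\<le>N. c i * Q a i * P d i) * (\<Sum>j\<le>N. e j * Q d j * P b j))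
      = (\<Sum>d\<le>N. \<Sum>i\<le>N. \<Sum>j\<le>N. c i * e j * Q a i * P b j * (Q d j * P d i))"
    by (simp add: sum_product mult_ac)
  also have "\<dots> = (\<Sum>i\<le>N. \<Sum>d\<le>N. \<Sum>j\<le>N. c i * e j * Q a i * P b j * (Q d j * P d i))"
    by (rule sum.swap)
  also have "\<dots> = (\<Sum>i\<le>N. \<Sum>j\<le>N. \<Sum>d\<le>N. c i * e j * Q a i * P b j * (Q d j * P d i))"
    by (intro sum.cong refl sum.swap)
  also have "\<dots> = (\<Sum>i\<le>N. \<Sum>j\<le>N. if j = i then c i * e j * Q a i * P b j else 0)"
    by (intro sum.cong refl) (simp add: biorth flip: sum_distrib_left)
  also have "\<dots> = (\<Sum>i\<le>N. c i * e i * Q a i * P b i)"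
    by simp
  finally show ?thesis .
qed

lemma trace_factored_matrix:
  fixes Q P :: "nat \<Rightarrow> nat \<Rightarrow> 'a::comm_ring_1"
  assumes biorth: "\<And>i j. i \<le> N \<Longrightarrow> j \<le> N \<Longrightarrow> (\<Sum>a\<le>N. Q a i * P a j) = (if i = j then 1 else 0)"
  shows "(\<Sum>a\<le>N. \<Sum>i\<le>N. c i * Q a i * P a i) = (\<Sum>i\<le>N. c i)"
proof -
  have "(\<Sum>a\<le>N. \<Sum>i\<le>N. c i * Q a i * P a i) = (\<Sum>i\<le>N. c i * (\<Sum>a\<le>N. Q a i * P a i))"
    by (subst sum.swap) (simp add: sum_distrib_left mult.assoc)
  also have "\<dots> = (\<Sum>i\<le>N. c i)"
    by (simp add: biorth)
  finally show ?thesis .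
qed

lemma trace_cube_factored_matrix:
  fixes M Q P :: "nat \<Rightarrow> nat \<Rightarrow> 'a::comm_ring_1"
  assumes biorth: "\<And>i j. i \<le> N \<Longrightarrow> j \<le> N \<Longrightarrow> (\<Sum>a\<le>N. Q a i * P a j) = (if i = j then 1 else 0)"
    and M: "\<And>a b. a \<le> N \<Longrightarrow> b \<le> N \<Longrightarrow> M a b = (\<Sum>i\<le>N. c i * Q a i * P b i)"
  shows "(\<Sum>k\<le>N. \<Sum>l\<le>N. \<Sum>d\<le>N. M k d * M d l * M l k) = (\<Sum>i\<le>N. c i ^ 3)"
proof -
  have square: "(\<Sum>d\<le>N. M k d * M d l) = (\<Sum>i\<le>N. c i ^ 2 * Q k i * P l i)"
    if "k \<le> N" "l \<le> N" for k l
    using that by (simp add: M factored_matrix_mult[OF biorth] power2_eq_square)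
  have cube: "(\<Sum>l\<le>N. (\<Sum>d\<le>N. M k d * M d l) * M l k) = (\<Sum>i\<le>N. c i ^ 3 * Q k i * P k i)"
    if "k \<le> N" for k
    using that by (simp add: square M factored_matrix_mult[OF biorth] power2_eq_square power3_eq_cube)
  have "(\<Sum>k\<le>N. \<Sum>l\<le>N. \<Sum>d\<le>N. M k d * M d l * M l k)
      = (\<Sum>k\<le>N. \<Sum>l\<le>N. (\<Sum>d\<le>N. M k d * M d l) * M l k)"
    by (simp add: sum_distrib_right)
  also have "\<dots> = (\<Sum>k\<le>N. \<Sum>i\<le>N. c i ^ 3 * Q k i * P k i)"
    by (simp add: cube)
  also have "\<dots> = (\<Sum>i\<le>N. c i ^ 3)"
    by (rule trace_factored_matrix[OF biorth])
  finally show ?thesis .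
qed

definition \<phi> :: real where "\<phi> = (1 + sqrt 5) / 2"
definition \<psi> :: real where "\<psi> = (1 - sqrt 5) / 2"

lemma phi_squared: "\<phi>\<^sup>2 = \<phi> + 1"
  by (simp add: \<phi>_def power2_eq_square field_simps)

lemma psi_squared: "\<psi>\<^sup>2 = \<psi> + 1"
  by (simp add: \<psi>_def power2_eq_square field_simps)

lemma phi_minus_psi: "\<phi> - \<psi> = sqrt 5"
  by (simp add: \<phi>_def \<psi>_def field_simps)

definition eigenpoly :: "nat \<Rightarrow> nat \<Rightarrow> real poly" where
  "eigenpoly N i = [:\<psi>, 1:] ^ i * [:\<phi>, 1:] ^ (N - i)"

text \<open>The linear forms \<open>(\<phi> x - \<psi>) / \<surd>5\<close> and \<open>(1 - x) / \<surd>5\<close> express \<open>x\<close> and \<open>1\<close> in terms of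
  \<open>x + \<psi>\<close> and \<open>x + \<phi>\<close>, so \<open>dualpoly N a\<close> holds the coordinates of \<open>x^a\<close> in the eigenbasis.\<close>

definition dualpoly :: "nat \<Rightarrow> nat \<Rightarrow> real poly" where
  "dualpoly N a = [:- \<psi> / sqrt 5, \<phi> / sqrt 5:] ^ a * [:1 / sqrt 5, - 1 / sqrt 5:] ^ (N - a)"

lemma monom_eq_sum_eigenpoly:
  assumes "a \<le> N"
  shows "monom 1 a = (\<Sum>i\<le>N. smult (coeff (dualpoly N a) i) (eigenpoly N i))"
proof -
  have "hom_subst N (hom_subst N (monom 1 a) [:- \<psi> / sqrt 5, \<phi> / sqrt 5:] [:1 / sqrt 5, - 1 / sqrt 5:])
      [:\<psi>, 1:] [:\<phi>, 1:] = monom 1 a"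
    using assms by (intro hom_subst_inverse) (auto simp: degree_monom_eq field_simps phi_minus_psi one_pCons)
  then have "hom_subst N (dualpoly N a) [:\<psi>, 1:] [:\<phi>, 1:] = monom 1 a"
    by (simp only: hom_subst_monom[OF assms] dualpoly_def)
  then show ?thesis
    by (simp add: hom_subst_def eigenpoly_def)
qed

lemma eigenpoly_dualpoly_biorthogonal:
  assumes "i \<le> N" "j \<le> N"
  shows "(\<Sum>a\<le>N. coeff (dualpoly N a) i * coeff (eigenpoly N j) a) = (if i = j then 1 else 0)"
proof -
  have "hom_subst N (hom_subst N (monom 1 j) [:\<psi>, 1:] [:\<phi>, 1:])
      [:- \<psi> / sqrt 5, \<phi> / sqrt 5:] [:1 / sqrt 5, - 1 / sqrt 5:] = monom 1 j"
    using assms by (intro hom_subst_inverse) (auto simp: degree_monom_eq field_simps phi_minus_psi one_pCons)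
  then have "hom_subst N (eigenpoly N j) [:- \<psi> / sqrt 5, \<phi> / sqrt 5:] [:1 / sqrt 5, - 1 / sqrt 5:]
      = monom 1 j"
    by (simp only: hom_subst_monom[OF assms(2)] eigenpoly_def)
  then have "(\<Sum>a\<le>N. smult (coeff (eigenpoly N j) a) (dualpoly N a)) = monom 1 j"
    by (simp add: hom_subst_def dualpoly_def)
  then show ?thesis
    by (auto simp: poly_eq_iff coeff_sum coeff_monom mult.commute dest: spec[of _ i])
qed

lemma hom_subst_eigenpoly:
  assumes "i \<le> N"
  shows "hom_subst N (eigenpoly N i) 1 [:1, 1:] = smult (\<psi> ^ i * \<phi> ^ (N - i)) (eigenpoly N i)"
proof (rule poly_eqI_off_roots[of "[:1, 1:]"])
  fix x :: real assume "poly [:1, 1:] x \<noteq> 0"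
  then have nz: "1 + x \<noteq> 0" by simp
  have root: "(1 + x) * (1 / (1 + x) + c) = c * (x + c)" if "c\<^sup>2 = c + 1" for c
    using nz that by (simp add: field_simps power2_eq_square)
  have deg: "degree (eigenpoly N i) \<le> N"
    unfolding eigenpoly_def hom_subst_monom[OF assms, symmetric] by (simp add: degree_hom_subst)
  have "poly (hom_subst N (eigenpoly N i) 1 [:1, 1:]) x = (1 + x) ^ N * poly (eigenpoly N i) (1 / (1 + x))"
    using nz by (simp add: poly_hom_subst[OF deg] add.commute)
  also have "\<dots> = ((1 + x) * (1 / (1 + x) + \<psi>)) ^ i * ((1 + x) * (1 / (1 + x) + \<phi>)) ^ (N - i)"
  proof -
    have "(1 + x) ^ N = (1 + x) ^ i * (1 + x) ^ (N - i)"
      using assms by (simp flip: power_add)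
    then show ?thesis
      by (simp add: eigenpoly_def power_mult_distrib mult_ac add_ac)
  qed
  also have "\<dots> = (\<psi> * (x + \<psi>)) ^ i * (\<phi> * (x + \<phi>)) ^ (N - i)"
    by (simp only: root psi_squared phi_squared)
  also have "\<dots> = poly (smult (\<psi> ^ i * \<phi> ^ (N - i)) (eigenpoly N i)) x"
    by (simp add: eigenpoly_def power_mult_distrib mult_ac add_ac)
  finally show "poly (hom_subst N (eigenpoly N i) 1 [:1, 1:]) x
      = poly (smult (\<psi> ^ i * \<phi> ^ (N - i)) (eigenpoly N i)) x" .
qed simp

lemma binomial_eq_sum_eigenvalues:
  assumes "a \<le> N"
  shows "real ((N - a) choose b)
    = (\<Sum>i\<le>N. \<psi> ^ i * \<phi> ^ (N - i) * coeff (dualpoly N a) i * coeff (eigenpoly N i) b)"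
proof -
  have "[:1, 1:] ^ (N - a) = hom_subst N (monom 1 a) 1 [:1, 1:]"
    by (simp add: hom_subst_monom[OF assms])
  also have "\<dots> = (\<Sum>i\<le>N. smult (coeff (dualpoly N a) i * (\<psi> ^ i * \<phi> ^ (N - i))) (eigenpoly N i))"
    by (simp add: monom_eq_sum_eigenpoly[OF assms] hom_subst_sum_smult hom_subst_eigenpoly)
  finally have "coeff ([:1, 1:] ^ (N - a)) b
      = (\<Sum>i\<le>N. \<psi> ^ i * \<phi> ^ (N - i) * coeff (dualpoly N a) i * coeff (eigenpoly N i) b)"
    by (simp add: coeff_sum mult_ac)
  moreover have "coeff ([:1, 1:] ^ (N - a)) b = real ((N - a) choose b)"
  proof (cases "b \<le> N - a")
    case True
    then show ?thesis by (simp add: coeff_linear_poly_power)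
  next
    case False
    have "degree ([:1::real, 1:] ^ (N - a)) \<le> N - a"
      by (rule order.trans[OF degree_power_le]) simp
    with False show ?thesis by (simp add: coeff_eq_0 binomial_eq_0)
  qed
  ultimately show ?thesis by simp
qed

lemma sum_eigenvalue_powers:
  assumes "k > 0"
  shows "(\<Sum>i\<le>N. (\<psi> ^ i * \<phi> ^ (N - i)) ^ k) = real (fib (k * Suc N)) / real (fib k)"
    (is "?S = _")
proof -
  have fib: "real (fib m) = (\<phi> ^ m - \<psi> ^ m) / sqrt 5" for m
    unfolding \<phi>_def \<psi>_def by (rule fib_closed_form)
  have "(\<psi> ^ i * \<phi> ^ (N - i)) ^ k = (\<psi> ^ k) ^ i * (\<phi> ^ k) ^ (N - i)" for i
    by (simp add: power_mult_distrib mult.commute flip: power_mult)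
  then have "(\<psi> ^ k) ^ Suc N - (\<phi> ^ k) ^ Suc N = (\<psi> ^ k - \<phi> ^ k) * ?S"
    by (simp only: diff_power_eq_sum lessThan_Suc_atMost)
  then have "(\<phi> ^ k) ^ Suc N - (\<psi> ^ k) ^ Suc N = (\<phi> ^ k - \<psi> ^ k) * ?S"
    by (simp add: left_diff_distrib)
  then have "real (fib (k * Suc N)) = real (fib k) * ?S"
    unfolding fib power_mult by simp
  moreover have "fib k \<noteq> 0"
    using assms fib_neq_0_nat by blast
  ultimately show ?thesis by simp
qed

theorem proposition7p8:
  fixes n :: nat
  assumes "n \<ge> 1"
  shows "real (\<Sum>k<n. \<Sum>l<n. \<Sum>d<n.
            binz (int n - 1 - int d) l * binz (int n - 1 - int k) d * binz (int n - 1 - int l) k)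
         = real (fib (3 * n)) / 2"
proof -
  obtain N where n: "n = Suc N"
    using assms by (cases n) auto
  define M where "M a b = real ((N - a) choose b)" for a b
  have binz: "real (binz (int N - int a) b) = M a b" if "a \<le> N" for a b
    using that by (simp add: binz_def M_def nat_diff_distrib)
  have "real (\<Sum>k<n. \<Sum>l<n. \<Sum>d<n.
            binz (int n - 1 - int d) l * binz (int n - 1 - int k) d * binz (int n - 1 - int l) k)
      = (\<Sum>k\<le>N. \<Sum>l\<le>N. \<Sum>d\<le>N. M k d * M d l * M l k)"
    unfolding of_nat_sum of_nat_mult n lessThan_Suc_atMost
    by (intro sum.cong refl) (simp add: binz mult_ac)
  also have "\<dots> = (\<Sum>i\<le>N. (\<psi> ^ i * \<phi> ^ (N - i)) ^ 3)"
    by (rule trace_cube_factored_matrix[where Q = "\<lambda>a i. coeff (dualpoly N a) i"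
          and P = "\<lambda>b i. coeff (eigenpoly N i) b"])
       (simp_all add: M_def eigenpoly_dualpoly_biorthogonal binomial_eq_sum_eigenvalues)
  also have "\<dots> = real (fib (3 * n)) / real (fib 3)"
    unfolding n by (rule sum_eigenvalue_powers) simp
  also have "fib 3 = 2"
    by (simp add: numeral_3_eq_3)
  finally show ?thesis by simp
qed

end
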